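(* Let $d\ge 2$. For $B\ge 1$ let $P_1(d,B)$ be the set of monic polynomials of degree $d$ with integer coefficients, all bounded in absolute value by $B$, and with constant coefficient $1$; let $R_1(d,B)\subseteq P_1(d,B)$ be the subset of those polynomials that are reducible over $\mathbb{Z}$. Then the coefficient vectors $(a_1,\dots,a_{d-1})$ of the polynomials in $R_1(d,B)$ (for all $B$) lie on an algebraic hypersurface of $\mathbb{C}^{d-1}$, and consequently \[\frac{|R_1(d,B)|}{|P_1(d,B)|}=O\!\left(\frac1B\right)\quad (B\to\infty).\] *)

theory Defs
  imports Complex_Main "HOL-Computational_Algebra.Polynomial" "HOL-Library.Landau_Symbols"
begin

definition P1 :: "nat \<Rightarrow> real \<Rightarrow> int poly set" where
  "P1 d B = {p. degree p = d \<and> lead_coeff p = 1 \<and> coeff p 0 = 1 \<and>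
                (\<forall>i. real_of_int \<bar>coeff p i\<bar> \<le> B)}"

definition R1 :: "nat \<Rightarrow> real \<Rightarrow> int poly set" where
  "R1 d B = {p \<in> P1 d B. \<not> irreducible p}"

text \<open>Coefficient vector (a_1,...,a_{d-1}), indexed by 0..d-2 (entry i is a_{i+1}),
  padded with zeros outside.\<close>
definition coeff_vec :: "nat \<Rightarrow> int poly \<Rightarrow> nat \<Rightarrow> int" where
  "coeff_vec d p = (\<lambda>i. if i < d - 1 then coeff p (Suc i) else 0)"

text \<open>A set of integer points of C^n (given as functions on {0..<n}) lies on an algebraic
  hypersurface: there is a nonzero complex polynomial in n variables, written as a finite
  sum of coefficients times distinct monomials (exponent vectors alpha supported in {0..<n}),
  vanishing on all of the points.\<close>
definition on_hypersurface :: "nat \<Rightarrow> (nat \<Rightarrow> int) set \<Rightarrow> bool" where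
  "on_hypersurface n A \<longleftrightarrow>
     (\<exists>S :: (nat \<Rightarrow> nat) set. \<exists>c :: (nat \<Rightarrow> nat) \<Rightarrow> complex.
        finite S \<and> (\<forall>\<alpha>\<in>S. \<forall>i\<ge>n. \<alpha> i = 0) \<and> (\<exists>\<alpha>\<in>S. c \<alpha> \<noteq> 0) \<and>
        (\<forall>a\<in>A. (\<Sum>\<alpha>\<in>S. c \<alpha> * (\<Prod>i<n. of_int (a i) ^ \<alpha> i)) = 0))"

end

(*
  A reducible p in P_1(d,B) splits as p = g h with g, h monic of positive degrees k and d - k
  and equal constant terms e = +-1, so p is determined by (k, e) and the d - 2 remaining
  coefficients y of g and h, and every coefficient of p is a polynomial of degree at most 2 in y.
  The images of finitely many polynomial maps from C^(d-2) to C^(d-1) lie on a hypersurface: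
  the (D+1)^(d-1) monomials of degree at most D in each of d - 1 variables, pulled back along
  the maps, lie in a space of dimension O(D^(d-2)), so for large D some nontrivial linear
  combination of them vanishes on all the images.
  For the count, Mignotte's bound and Landau's inequality bound the coefficients of g and h by
  2^d sqrt(d+1) B, so |R_1(d,B)| = O(B^(d-2)), whereas |P_1(d,B)| >= B^(d-1).
*)

theory Submission
  imports Defs "HOL-Library.Function_Algebras" "HOL-Probability.Product_PMF"
    "Berlekamp_Zassenhaus.Factor_Bound"
begin

hide_const (open) up_ring.coeff module.smult

section \<open>Linear relations among functions\<close>

lemma (in vector_space) nontrivial_relation_if_card_less:
  assumes "finite S" "finite T" "card T < card S" "v ` S \<subseteq> span T"
  obtains c where "\<exists>\<alpha>\<in>S. c \<alpha> \<noteq> 0" "(\<Sum>\<alpha>\<in>S. scale (c \<alpha>) (v \<alpha>)) = 0"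
proof (cases "inj_on v S")
  case True
  have "\<not> independent (v ` S)"
    using independent_span_bound[OF assms(2) _ assms(4)] assms(3) card_image[OF True] by auto
  then obtain u where u: "\<exists>x\<in>v ` S. u x \<noteq> 0" "(\<Sum>x\<in>v ` S. scale (u x) x) = 0"
    using dependent_finite[of "v ` S"] assms(1) by auto
  show ?thesis
  proof
    show "\<exists>\<alpha>\<in>S. (u \<circ> v) \<alpha> \<noteq> 0" using u(1) by auto
    show "(\<Sum>\<alpha>\<in>S. scale ((u \<circ> v) \<alpha>) (v \<alpha>)) = 0" using u(2) by (simp add: sum.reindex[OF True])
  qed
next
  case False
  then obtain \<alpha> \<beta> where "\<alpha> \<in> S" "\<beta> \<in> S" "\<alpha> \<noteq> \<beta>" "v \<alpha> = v \<beta>"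
    unfolding inj_on_def by blast
  show ?thesis
  proof
    let ?c = "\<lambda>\<gamma>. if \<gamma> = \<alpha> then 1 else if \<gamma> = \<beta> then -1 else (0::'a)"
    show "\<exists>\<gamma>\<in>S. ?c \<gamma> \<noteq> 0" using \<open>\<alpha> \<in> S\<close> by force
    have "(\<Sum>\<gamma>\<in>S. scale (?c \<gamma>) (v \<gamma>)) = (\<Sum>\<gamma>\<in>S. (if \<gamma> = \<alpha> then v \<gamma> else 0) - (if \<gamma> = \<beta> then v \<gamma> else 0))"
      using \<open>\<alpha> \<noteq> \<beta>\<close> by (intro sum.cong) auto
    also have "\<dots> = 0"
      using assms(1) \<open>\<alpha> \<in> S\<close> \<open>\<beta> \<in> S\<close> \<open>v \<alpha> = v \<beta>\<close> by (simp add: sum_subtractf sum.delta')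
    finally show "(\<Sum>\<gamma>\<in>S. scale (?c \<gamma>) (v \<gamma>)) = 0" .
  qed
qed

definition scale_fun :: "'a::field \<Rightarrow> ('x \<Rightarrow> 'a) \<Rightarrow> 'x \<Rightarrow> 'a" where
  "scale_fun c f = (\<lambda>x. c * f x)"

interpretation fun_space: vector_space scale_fun
  by unfold_locales (auto simp: scale_fun_def fun_eq_iff algebra_simps)

lemma sum_fun_apply: "(\<Sum>i\<in>I. f i) x = (\<Sum>i\<in>I. f i x)"
  by (induction I rule: infinite_finite_induct) auto

lemma prod_fun_apply: "(\<Prod>i\<in>I. f i) x = (\<Prod>i\<in>I. f i x)"
  by (induction I rule: infinite_finite_induct) auto

lemma power_fun_apply: "(f ^ k) x = f x ^ k"
  by (induction k) auto

lemma scale_fun_mult: "scale_fun c f * g = scale_fun c (f * g)"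
  by (simp add: scale_fun_def fun_eq_iff)

lemma subspace_mult_preimage:
  assumes "fun_space.subspace V"
  shows "fun_space.subspace {f. f * g \<in> V}"
  using assms unfolding fun_space.subspace_def by (simp add: distrib_right scale_fun_mult)

section \<open>Polynomial functions on integer points\<close>

definition monomial_fun :: "nat \<Rightarrow> (nat \<Rightarrow> nat) \<Rightarrow> (nat \<Rightarrow> int) \<Rightarrow> 'a::field" where
  "monomial_fun m \<beta> y = (\<Prod>j<m. of_int (y j) ^ \<beta> j)"

definition exponent_box :: "nat \<Rightarrow> nat \<Rightarrow> (nat \<Rightarrow> nat) set" where
  "exponent_box m e = PiE_dflt {..<m} 0 (\<lambda>_. {..e})"

definition poly_funs :: "nat \<Rightarrow> nat \<Rightarrow> ((nat \<Rightarrow> int) \<Rightarrow> 'a::field) set" where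
  "poly_funs m e = fun_space.span (monomial_fun m ` exponent_box m e)"

lemma finite_exponent_box: "finite (exponent_box m e)"
  by (auto simp: exponent_box_def)

lemma card_exponent_box: "card (exponent_box m e) = (e + 1) ^ m"
  by (simp add: exponent_box_def card_PiE_dflt)

lemma exponent_box_mono: "e \<le> e' \<Longrightarrow> exponent_box m e \<subseteq> exponent_box m e'"
  by (auto simp: exponent_box_def PiE_dflt_def)

lemma exponent_box_add:
  "\<beta> \<in> exponent_box m a \<Longrightarrow> \<gamma> \<in> exponent_box m b \<Longrightarrow> \<beta> + \<gamma> \<in> exponent_box m (a + b)"
  by (auto simp: exponent_box_def PiE_dflt_def add_mono)

lemma monomial_fun_add: "monomial_fun m (\<beta> + \<gamma>) = monomial_fun m \<beta> * monomial_fun m \<gamma>"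
  by (simp add: monomial_fun_def fun_eq_iff power_add prod.distrib)

lemma subspace_poly_funs: "fun_space.subspace (poly_funs m e)"
  unfolding poly_funs_def by (rule fun_space.subspace_span)

lemma poly_funs_mono: "e \<le> e' \<Longrightarrow> poly_funs m e \<subseteq> poly_funs m e'"
  unfolding poly_funs_def by (intro fun_space.span_mono image_mono exponent_box_mono)

lemma monomial_in_poly_funs: "\<beta> \<in> exponent_box m e \<Longrightarrow> monomial_fun m \<beta> \<in> poly_funs m e"
  unfolding poly_funs_def by (intro fun_space.span_base imageI)

lemma const_in_poly_funs: "(\<lambda>_. c) \<in> poly_funs m e"
proof -
  have "0 \<in> exponent_box m e" by (auto simp: exponent_box_def PiE_dflt_def)
  then have "scale_fun c (monomial_fun m 0) \<in> poly_funs m e"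
    unfolding poly_funs_def by (intro fun_space.span_scale fun_space.span_base imageI)
  then show ?thesis by (simp add: scale_fun_def monomial_fun_def)
qed

lemma one_in_poly_funs: "1 \<in> poly_funs m e"
  using const_in_poly_funs[of 1] by (simp add: one_fun_def)

lemma coordinate_in_poly_funs:
  assumes "j < m" "1 \<le> e"
  shows "(\<lambda>y. of_int (y j)) \<in> poly_funs m e"
proof -
  have "(\<lambda>i. if i = j then 1 else 0) \<in> exponent_box m e"
    using assms by (auto simp: exponent_box_def PiE_dflt_def)
  moreover have "monomial_fun m (\<lambda>i. if i = j then 1 else 0) = (\<lambda>y. of_int (y j) :: 'a)"
  proof
    fix y :: "nat \<Rightarrow> int"
    have "monomial_fun m (\<lambda>i. if i = j then 1 else 0) y = (\<Prod>i<m. if i = j then of_int (y i) else (1::'a))"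
      unfolding monomial_fun_def by (intro prod.cong) auto
    then show "monomial_fun m (\<lambda>i. if i = j then 1 else 0) y = (of_int (y j) :: 'a)"
      using assms(1) by simp
  qed
  ultimately show ?thesis by (metis monomial_in_poly_funs)
qed

lemma sum_in_poly_funs: "(\<And>i. i \<in> I \<Longrightarrow> f i \<in> poly_funs m e) \<Longrightarrow> (\<Sum>i\<in>I. f i) \<in> poly_funs m e"
  unfolding poly_funs_def by (rule fun_space.span_sum)

lemma mult_in_poly_funs:
  assumes "f \<in> poly_funs m a" "g \<in> poly_funs m b"
  shows "f * g \<in> poly_funs m (a + b)"
proof -
  have "monomial_fun m \<beta> * g \<in> poly_funs m (a + b)" if \<beta>: "\<beta> \<in> exponent_box m a" for \<beta>
  proof -
    have "monomial_fun m \<gamma> * monomial_fun m \<beta> \<in> poly_funs m (a + b)" if "\<gamma> \<in> exponent_box m b" for \<gamma>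
      using exponent_box_add[OF that \<beta>]
      by (simp add: monomial_fun_add[symmetric] monomial_in_poly_funs add.commute)
    then have "poly_funs m b \<subseteq> {g. g * monomial_fun m \<beta> \<in> poly_funs m (a + b)}"
      unfolding poly_funs_def[of m b]
      by (intro fun_space.span_minimal subspace_mult_preimage subspace_poly_funs) auto
    then show ?thesis using assms(2) by (auto simp: mult.commute)
  qed
  then have "poly_funs m a \<subseteq> {f. f * g \<in> poly_funs m (a + b)}"
    unfolding poly_funs_def[of m a]
    by (intro fun_space.span_minimal subspace_mult_preimage subspace_poly_funs) auto
  then show ?thesis using assms(1) by auto
qed

lemma power_in_poly_funs: "f \<in> poly_funs m a \<Longrightarrow> f ^ k \<in> poly_funs m (k * a)"
  by (induction k) (auto simp: one_in_poly_funs mult_in_poly_funs)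

lemma prod_in_poly_funs:
  "(\<And>i. i \<in> I \<Longrightarrow> f i \<in> poly_funs m (a i)) \<Longrightarrow> (\<Prod>i\<in>I. f i) \<in> poly_funs m (\<Sum>i\<in>I. a i)"
proof (induction I rule: infinite_finite_induct)
  case (insert i I)
  then show ?case
    unfolding prod.insert[OF insert.hyps] sum.insert[OF insert.hyps] by (intro mult_in_poly_funs) auto
qed (simp_all add: one_in_poly_funs)

lemma monomial_comp_in_poly_funs:
  assumes "\<And>i. i < n \<Longrightarrow> (\<lambda>y. of_int (F y i) :: 'a::field) \<in> poly_funs m a"
  shows "(\<lambda>y. monomial_fun n \<alpha> (F y) :: 'a) \<in> poly_funs m (\<Sum>i<n. \<alpha> i * a)"
proof -
  have "(\<lambda>y. monomial_fun n \<alpha> (F y)) = (\<Prod>i<n. (\<lambda>y. of_int (F y i) :: 'a) ^ \<alpha> i)"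
    by (simp add: monomial_fun_def fun_eq_iff prod_fun_apply power_fun_apply)
  also have "\<dots> \<in> poly_funs m (\<Sum>i<n. \<alpha> i * a)"
    using assms by (intro prod_in_poly_funs power_in_poly_funs) auto
  finally show ?thesis .
qed

section \<open>Images of polynomial maps lie on a hypersurface\<close>

text \<open>Functions on a disjoint union of copies of \<open>\<int>^m\<close>, one for each parametrization,
  so that a single dimension count covers finitely many polynomial maps.\<close>

definition tagged :: "'q \<Rightarrow> ('y \<Rightarrow> 'a::zero) \<Rightarrow> 'q \<times> 'y \<Rightarrow> 'a" where
  "tagged q f = (\<lambda>(q', y). if q' = q then f y else 0)"

lemma subspace_tagged_preimage:
  assumes "fun_space.subspace V"
  shows "fun_space.subspace {f. tagged q f \<in> V}"
proof -
  have linear: "tagged q 0 = 0" "tagged q (f + g) = tagged q f + tagged q g"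
    "tagged q (scale_fun c f) = scale_fun c (tagged q f)" for f g c
    by (auto simp: tagged_def scale_fun_def fun_eq_iff)
  show ?thesis using assms unfolding fun_space.subspace_def by (simp add: linear)
qed

lemma tagged_in_span:
  assumes "f \<in> fun_space.span M"
  shows "tagged q f \<in> fun_space.span (tagged q ` M)"
proof -
  have "fun_space.span M \<subseteq> {f. tagged q f \<in> fun_space.span (tagged q ` M)}"
    by (intro fun_space.span_minimal subspace_tagged_preimage fun_space.subspace_span)
       (auto intro: fun_space.span_base)
  then show ?thesis using assms by auto
qed

lemma ex_mult_power_less_power:
  fixes b c m n :: nat
  assumes "m < n"
  shows "\<exists>D. c * (b * D + 1) ^ m < (D + 1) ^ n"
proof
  define D where "D = c * (b + 1) ^ m"
  have "c * (b * D + 1) ^ m \<le> c * ((b + 1) * (D + 1)) ^ m"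
    by (intro mult_left_mono power_mono) (auto simp: algebra_simps)
  also have "\<dots> = c * (b + 1) ^ m * (D + 1) ^ m"
    by (simp only: power_mult_distrib mult.assoc)
  also have "\<dots> = D * (D + 1) ^ m"
    by (simp add: D_def)
  also have "\<dots> < (D + 1) ^ Suc m"
    by simp
  also have "\<dots> \<le> (D + 1) ^ n"
    using assms by (intro power_increasing) auto
  finally show "c * (b * D + 1) ^ m < (D + 1) ^ n" .
qed

lemma on_hypersurface_subset: "on_hypersurface n A \<Longrightarrow> B \<subseteq> A \<Longrightarrow> on_hypersurface n B"
  unfolding on_hypersurface_def by blast

lemma card_tagged_monomials_le:
  fixes I :: "'q set"
  assumes "finite I"
  shows "card (\<Union>q\<in>I. tagged q ` (monomial_fun m ` exponent_box m e :: ((nat \<Rightarrow> int) \<Rightarrow> 'a::field) set))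
    \<le> card I * (e + 1) ^ m"
proof -
  let ?M = "monomial_fun m ` exponent_box m e :: ((nat \<Rightarrow> int) \<Rightarrow> 'a) set"
  have "card (\<Union>q\<in>I. tagged q ` ?M) \<le> (\<Sum>q\<in>I. card (tagged q ` ?M))"
    using assms by (rule card_UN_le)
  also have "\<dots> \<le> (\<Sum>q\<in>I. card (exponent_box m e))"
    by (intro sum_mono order.trans[OF card_image_le card_image_le] finite_imageI finite_exponent_box)
  finally show ?thesis
    by (simp add: card_exponent_box)
qed

lemma pullback_in_span_tagged_monomials:
  assumes "\<And>q i. q \<in> I \<Longrightarrow> i < n \<Longrightarrow> (\<lambda>y. of_int (F q y i) :: 'a::field) \<in> poly_funs m a"
  shows "(\<Sum>q\<in>I. tagged q (\<lambda>y. monomial_fun n \<alpha> (F q y) :: 'a))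
    \<in> fun_space.span (\<Union>q\<in>I. tagged q ` monomial_fun m ` exponent_box m (\<Sum>i<n. \<alpha> i * a))"
proof (rule fun_space.span_sum)
  fix q assume "q \<in> I"
  have "(\<lambda>y. monomial_fun n \<alpha> (F q y) :: 'a) \<in> poly_funs m (\<Sum>i<n. \<alpha> i * a)"
    by (rule monomial_comp_in_poly_funs) (rule assms[OF \<open>q \<in> I\<close>])
  then have "tagged q (\<lambda>y. monomial_fun n \<alpha> (F q y) :: 'a)
      \<in> fun_space.span (tagged q ` monomial_fun m ` exponent_box m (\<Sum>i<n. \<alpha> i * a))"
    unfolding poly_funs_def by (rule tagged_in_span)
  also have "\<dots> \<subseteq> fun_space.span (\<Union>q\<in>I. tagged q ` monomial_fun m ` exponent_box m (\<Sum>i<n. \<alpha> i * a))"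
    using \<open>q \<in> I\<close> by (intro fun_space.span_mono) blast
  finally show "tagged q (\<lambda>y. monomial_fun n \<alpha> (F q y) :: 'a)
      \<in> fun_space.span (\<Union>q\<in>I. tagged q ` monomial_fun m ` exponent_box m (\<Sum>i<n. \<alpha> i * a))" .
qed

lemma on_hypersurface_poly_images:
  fixes F :: "'q \<Rightarrow> (nat \<Rightarrow> int) \<Rightarrow> nat \<Rightarrow> int"
  assumes "finite I" "m < n"
    and poly: "\<And>q i. q \<in> I \<Longrightarrow> i < n \<Longrightarrow> (\<lambda>y. of_int (F q y i) :: complex) \<in> poly_funs m a"
  shows "on_hypersurface n (\<Union>q\<in>I. range (F q))"
proof -
  obtain D where D: "card I * (n * a * D + 1) ^ m < (D + 1) ^ n"
    using ex_mult_power_less_power[OF assms(2)] by blast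
  define S where "S = exponent_box n D"
  define T :: "('q \<times> (nat \<Rightarrow> int) \<Rightarrow> complex) set"
    where "T = (\<Union>q\<in>I. tagged q ` monomial_fun m ` exponent_box m (n * a * D))"
  define v where "v \<alpha> = (\<Sum>q\<in>I. tagged q (\<lambda>y. monomial_fun n \<alpha> (F q y) :: complex))" for \<alpha>
  have card_less: "card T < card S"
    using card_tagged_monomials_le[OF assms(1)] D unfolding S_def T_def card_exponent_box
    by (rule le_less_trans)
  have finite: "finite S" "finite T"
    using assms(1) by (auto simp: S_def T_def finite_exponent_box)
  have "v \<alpha> \<in> fun_space.span T" if "\<alpha> \<in> S" for \<alpha>
  proof -
    have "(\<Sum>i<n. \<alpha> i * a) \<le> (\<Sum>i<n. D * a)"
      using \<open>\<alpha> \<in> S\<close> by (intro sum_mono mult_right_mono) (auto simp: S_def exponent_box_def PiE_dflt_def)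
    also have "\<dots> = n * a * D"
      by (simp add: ac_simps)
    finally have "exponent_box m (\<Sum>i<n. \<alpha> i * a) \<subseteq> exponent_box m (n * a * D)"
      by (rule exponent_box_mono)
    have "v \<alpha> \<in> fun_space.span (\<Union>q\<in>I. tagged q ` monomial_fun m ` exponent_box m (\<Sum>i<n. \<alpha> i * a))"
      unfolding v_def by (rule pullback_in_span_tagged_monomials) (rule poly)
    also have "\<dots> \<subseteq> fun_space.span T"
      unfolding T_def using \<open>exponent_box m _ \<subseteq> _\<close>
      by (intro fun_space.span_mono UN_mono image_mono) auto
    finally show ?thesis .
  qed
  then obtain c where c: "\<exists>\<alpha>\<in>S. c \<alpha> \<noteq> 0" "(\<Sum>\<alpha>\<in>S. scale_fun (c \<alpha>) (v \<alpha>)) = 0"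
    using fun_space.nontrivial_relation_if_card_less[OF finite card_less] by blast
  have "(\<Sum>\<alpha>\<in>S. c \<alpha> * monomial_fun n \<alpha> x) = 0" if x: "x \<in> (\<Union>q\<in>I. range (F q))" for x
  proof -
    obtain q y where "q \<in> I" "x = F q y" using x by blast
    then have "v \<alpha> (q, y) = monomial_fun n \<alpha> x" for \<alpha>
      using assms(1) by (simp add: v_def sum_fun_apply tagged_def)
    then show ?thesis
      using fun_cong[OF c(2), of "(q, y)"] by (simp add: sum_fun_apply scale_fun_def)
  qed
  moreover have "\<forall>\<alpha>\<in>S. \<forall>i\<ge>n. \<alpha> i = 0"
    by (auto simp: S_def exponent_box_def PiE_dflt_def)
  ultimately show ?thesis
    unfolding on_hypersurface_def monomial_fun_def using finite(1) c(1) by blast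
qed

section \<open>Factorizations of reducible polynomials\<close>

definition monic_poly :: "nat \<Rightarrow> int \<Rightarrow> (nat \<Rightarrow> int) \<Rightarrow> int poly" where
  "monic_poly k c y = Abs_poly (\<lambda>i. if i = 0 then c else if i < k then y (i - 1) else if i = k then 1 else 0)"

lemma coeff_monic_poly:
  "coeff (monic_poly k c y) i = (if i = 0 then c else if i < k then y (i - 1) else if i = k then 1 else 0)"
  unfolding monic_poly_def by (subst coeff_Abs_poly[of k]) auto

lemma
  assumes "0 < k"
  shows degree_monic_poly: "degree (monic_poly k c y) = k"
    and lead_coeff_monic_poly: "lead_coeff (monic_poly k c y) = 1"
proof -
  have "coeff (monic_poly k c y) k = 1"
    using assms by (simp add: coeff_monic_poly)
  moreover have "degree (monic_poly k c y) \<le> k"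
    by (rule degree_le) (simp add: coeff_monic_poly)
  ultimately show "degree (monic_poly k c y) = k"
    by (metis le_antisym le_degree one_neq_zero)
  with \<open>coeff (monic_poly k c y) k = 1\<close> show "lead_coeff (monic_poly k c y) = 1"
    by simp
qed

lemma monic_poly_cong: "(\<And>j. j < k - 1 \<Longrightarrow> y j = y' j) \<Longrightarrow> monic_poly k c y = monic_poly k c y'"
  by (rule poly_eqI) (simp add: coeff_monic_poly)

lemma monic_poly_coeffs:
  assumes "lead_coeff p = 1" "0 < degree p"
  shows "p = monic_poly (degree p) (coeff p 0) (\<lambda>j. coeff p (Suc j))"
  using assms by (intro poly_eqI) (auto simp: coeff_monic_poly coeff_eq_0)

lemma coeff_monic_poly_in_poly_funs:
  assumes "l + k \<le> Suc m"
  shows "(\<lambda>y. of_int (coeff (monic_poly k c (\<lambda>j. y (l + j))) i)) \<in> poly_funs m 1"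
proof (cases "i = 0 \<or> k \<le> i")
  case True
  then have "(\<lambda>y. of_int (coeff (monic_poly k c (\<lambda>j. y (l + j))) i)) =
      (\<lambda>_. of_int (if i = 0 then c else if i = k then 1 else 0) :: 'a)"
    by (auto simp: coeff_monic_poly fun_eq_iff)
  then show ?thesis by (simp add: const_in_poly_funs)
next
  case False
  then have "l + (i - 1) < m"
    using assms by linarith
  then show ?thesis
    using False coordinate_in_poly_funs[of "l + (i - 1)" m 1] by (simp add: coeff_monic_poly)
qed

text \<open>The \<open>d - 2\<close> middle coefficients of both factors are stored consecutively in \<open>y\<close>.\<close>

definition factored_poly :: "nat \<Rightarrow> nat \<Rightarrow> int \<Rightarrow> (nat \<Rightarrow> int) \<Rightarrow> int poly" where
  "factored_poly d k e y = monic_poly k e y * monic_poly (d - k) e (\<lambda>j. y (k - 1 + j))"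

lemma coeff_factored_poly_in_poly_funs:
  assumes "0 < k" "k < d"
  shows "(\<lambda>y. of_int (coeff (factored_poly d k e y) s)) \<in> poly_funs (d - 2) 2"
proof -
  have "(\<lambda>y. of_int (coeff (factored_poly d k e y) s)) =
    (\<Sum>i\<in>{..s}. (\<lambda>y. of_int (coeff (monic_poly k e (\<lambda>j. y (0 + j))) i)) *
              (\<lambda>y. of_int (coeff (monic_poly (d - k) e (\<lambda>j. y (k - 1 + j))) (s - i))))"
    by (simp add: factored_poly_def coeff_mult fun_eq_iff sum_fun_apply)
  also have "\<dots> \<in> poly_funs (d - 2) (1 + 1)"
    using assms by (intro sum_in_poly_funs mult_in_poly_funs coeff_monic_poly_in_poly_funs) auto
  finally show ?thesis by (simp add: numeral_2_eq_2)
qed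

lemma reducible_monic_int_polyE:
  fixes p :: "int poly"
  assumes "lead_coeff p = 1" "0 < degree p" "\<not> irreducible p"
  obtains g h where "p = g * h" "lead_coeff g = 1" "lead_coeff h = 1" "0 < degree g" "0 < degree h"
proof -
  have "p \<noteq> 0" "\<not> is_unit p"
    using assms(1,2) by (auto simp: is_unit_poly_iff)
  then obtain a b where ab: "p = a * b" "\<not> is_unit a" "\<not> is_unit b"
    using assms(3) unfolding irreducible_def by blast
  have "lead_coeff a * lead_coeff b = 1"
    using assms(1) ab(1) by (simp add: lead_coeff_mult)
  then have units: "lead_coeff a \<in> {1, -1}" "lead_coeff b = lead_coeff a"
    by (auto simp: zmult_eq_1_iff)
  have positive_degree: "0 < degree q" if "\<not> is_unit q" "lead_coeff q \<in> {1, -1}" for q :: "int poly"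
  proof (rule ccontr)
    assume "\<not> 0 < degree q"
    then have "q = [:lead_coeff q:]"
      using degree_0_id[of q] by simp
    then have "is_unit q"
      using that(2) by (auto simp: is_unit_poly_iff intro!: exI[of _ "lead_coeff q"])
    with that(1) show False ..
  qed
  show ?thesis
  proof
    show "p = smult (lead_coeff a) a * smult (lead_coeff b) b"
      using ab(1) \<open>lead_coeff a * lead_coeff b = 1\<close> by (simp add: mult.commute)
    show "lead_coeff (smult (lead_coeff a) a) = 1" "lead_coeff (smult (lead_coeff b) b) = 1"
      using units by auto
    show "0 < degree (smult (lead_coeff a) a)" "0 < degree (smult (lead_coeff b) b)"
      using units ab(2,3) positive_degree by auto
  qed
qed

definition int_box :: "nat \<Rightarrow> int \<Rightarrow> (nat \<Rightarrow> int) set" where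
  "int_box m N = PiE_dflt {..<m} 0 (\<lambda>_. {-N..N})"

lemma finite_int_box: "finite (int_box m N)"
  by (auto simp: int_box_def)

lemma card_int_box: "card (int_box m N) = nat (2 * N + 1) ^ m"
  by (simp add: int_box_def card_PiE_dflt)

lemma monic_mult_factored_polyE:
  assumes "lead_coeff g = 1" "lead_coeff h = 1" "0 < degree g" "0 < degree h" "coeff h 0 = coeff g 0"
    and "\<And>i. \<bar>coeff g i\<bar> \<le> N" "\<And>i. \<bar>coeff h i\<bar> \<le> N"
  obtains y where "g * h = factored_poly (degree g + degree h) (degree g) (coeff g 0) y"
    and "y \<in> int_box (degree g + degree h - 2) N"
proof
  define k where "k = degree g"
  define d where "d = degree g + degree h"
  define y where "y j = (if j < k - 1 then coeff g (Suc j) else if j < d - 2 then coeff h (j - (k - 1) + 1) else 0)"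
    for j
  have "g = monic_poly k (coeff g 0) (\<lambda>j. coeff g (Suc j))"
    using monic_poly_coeffs[OF assms(1,3)] by (simp add: k_def)
  also have "\<dots> = monic_poly k (coeff g 0) y"
    by (rule monic_poly_cong) (simp add: y_def)
  finally have "g = monic_poly k (coeff g 0) y" .
  have "h = monic_poly (d - k) (coeff h 0) (\<lambda>j. coeff h (Suc j))"
    using monic_poly_coeffs[OF assms(2,4)] by (simp add: k_def d_def)
  also have "\<dots> = monic_poly (d - k) (coeff g 0) (\<lambda>j. y (k - 1 + j))"
    using assms(3) unfolding assms(5) by (intro monic_poly_cong) (auto simp: y_def k_def d_def)
  finally have "h = monic_poly (d - k) (coeff g 0) (\<lambda>j. y (k - 1 + j))" .
  with \<open>g = monic_poly k (coeff g 0) y\<close> show "g * h = factored_poly (degree g + degree h) (degree g) (coeff g 0) y"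
    by (simp add: factored_poly_def k_def d_def)
  have "0 \<le> N"
    using assms(6)[of 0] by linarith
  then have "y j \<in> {-N..N}" for j
    using assms(6)[of "Suc j"] assms(7)[of "j - (k - 1) + 1"] by (auto simp: y_def)
  moreover have "y j = 0" if "d - 2 \<le> j" for j
    using that assms(4) by (auto simp: y_def k_def d_def)
  ultimately show "y \<in> int_box (degree g + degree h - 2) N"
    by (auto simp: int_box_def PiE_dflt_def d_def)
qed

lemma mahler_measure_le_coeff_bound:
  fixes p :: "int poly"
  assumes "\<And>i. real_of_int \<bar>coeff p i\<bar> \<le> M"
  shows "mahler_measure p \<le> sqrt (real (degree p + 1)) * M"
proof -
  have "0 \<le> M"
    using assms[of 0] by linarith
  have "real_of_int (\<Sum>a\<leftarrow>coeffs p. a * a) = (\<Sum>i\<le>degree p. (real_of_int \<bar>coeff p i\<bar>)\<^sup>2)"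
    by (cases "p = 0")
       (simp_all add: coeffs_def interv_sum_list_conv_sum_set_nat atLeastLessThanSuc_atLeastAtMost atLeast0AtMost
         power2_eq_square o_def del: upt_Suc sum.op_ivl_Suc)
  also have "\<dots> \<le> (\<Sum>i\<le>degree p. M\<^sup>2)"
    using assms by (intro sum_mono power_mono) auto
  also have "\<dots> = (sqrt (real (degree p + 1)) * M)\<^sup>2"
    by (simp add: power_mult_distrib)
  finally have "sqrt (real_of_int (\<Sum>a\<leftarrow>coeffs p. a * a)) \<le> sqrt (real (degree p + 1)) * M"
    using \<open>0 \<le> M\<close> by (simp add: real_le_lsqrt)
  then show ?thesis
    using Landau_inequality_mahler_measure[of p] by linarith
qed

lemma abs_coeff_factor_le:
  fixes g p :: "int poly"
  assumes "g dvd p" "p \<noteq> 0" "\<And>i. real_of_int \<bar>coeff p i\<bar> \<le> M"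
  shows "real_of_int \<bar>coeff g i\<bar> \<le> 2 ^ degree p * sqrt (real (degree p + 1)) * M"
proof -
  have "real (degree g choose i) \<le> 2 ^ degree g"
    using binomial_le_pow2 of_nat_le_iff by fastforce
  also have "\<dots> \<le> 2 ^ degree p"
    using dvd_imp_degree_le[OF assms(1,2)] by (intro power_increasing) auto
  finally have binomial: "real (degree g choose i) \<le> 2 ^ degree p" .
  have "real_of_int \<bar>coeff g i\<bar> \<le> (degree g choose i) * mahler_measure g"
    by (rule Mignotte_bound)
  also have "\<dots> \<le> 2 ^ degree p * mahler_measure p"
    using binomial mahler_measure_dvd[OF assms(2,1)]
    by (intro mult_mono mahler_measure_ge_0) auto
  also have "\<dots> \<le> 2 ^ degree p * (sqrt (real (degree p + 1)) * M)"
    using mahler_measure_le_coeff_bound[OF assms(3)] by simp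
  finally show ?thesis by simp
qed

text \<open>Mignotte's bound: \<open>2^d\<close> bounds the binomial coefficients, \<open>sqrt (d + 1) B\<close> the
  Mahler measure.\<close>

definition factor_coeff_bound :: "nat \<Rightarrow> real \<Rightarrow> int" where
  "factor_coeff_bound d B = \<lfloor>2 ^ d * sqrt (real (d + 1)) * B\<rfloor>"

lemma R1_factoredE:
  assumes "p \<in> R1 d B" "0 < d"
  obtains k e y where "k \<in> {1..<d}" "e \<in> {1, -1}" "p = factored_poly d k e y"
    "y \<in> int_box (d - 2) (factor_coeff_bound d B)"
proof -
  have p: "degree p = d" "lead_coeff p = 1" "coeff p 0 = 1" "\<And>i. real_of_int \<bar>coeff p i\<bar> \<le> B"
    "\<not> irreducible p"
    using assms(1) by (auto simp: R1_def P1_def)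
  obtain g h where gh: "p = g * h" "lead_coeff g = 1" "lead_coeff h = 1" "0 < degree g" "0 < degree h"
    using reducible_monic_int_polyE[OF p(2) _ p(5)] p(1) assms(2) by blast
  have degree: "degree g + degree h = d"
    using p(1) gh by (metis degree_mult_eq leading_coeff_0_iff zero_neq_one)
  have "coeff g 0 * coeff h 0 = 1"
    using p(3) gh(1) by (simp add: coeff_mult_0)
  then have e: "coeff g 0 \<in> {1, -1}" "coeff h 0 = coeff g 0"
    by (auto simp: zmult_eq_1_iff)
  have bound: "\<bar>coeff q i\<bar> \<le> factor_coeff_bound d B" if "q dvd p" for q i
    using abs_coeff_factor_le[OF that _ p(4)] p(1,2)
    unfolding factor_coeff_bound_def le_floor_iff by fastforce
  obtain y where "g * h = factored_poly d (degree g) (coeff g 0) y"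
    "y \<in> int_box (d - 2) (factor_coeff_bound d B)"
    using monic_mult_factored_polyE[OF gh(2-5) e(2) bound bound] gh(1) degree by auto
  then show ?thesis
    using that[of "degree g" "coeff g 0" y] gh(1,4,5) degree e(1) by auto
qed

lemma coeff_vec_R1_on_hypersurface:
  assumes "2 \<le> d"
  shows "on_hypersurface (d - 1) (coeff_vec d ` (\<Union>B. R1 d B))"
proof (rule on_hypersurface_subset)
  define F where "F q y = coeff_vec d (factored_poly d (fst q) (snd q) y)" for q y
  show "on_hypersurface (d - 1) (\<Union>q\<in>{1..<d} \<times> {1, -1}. range (F q))"
  proof (rule on_hypersurface_poly_images)
    show "(\<lambda>y. of_int (F q y i) :: complex) \<in> poly_funs (d - 2) 2"
      if "q \<in> {1..<d} \<times> {1, -1}" "i < d - 1" for q i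
      using that coeff_factored_poly_in_poly_funs[of "fst q" d "snd q" "Suc i"]
      by (auto simp: F_def coeff_vec_def)
  qed (use assms in auto)
  show "coeff_vec d ` (\<Union>B. R1 d B) \<subseteq> (\<Union>q\<in>{1..<d} \<times> {1, -1}. range (F q))"
  proof
    fix a assume "a \<in> coeff_vec d ` (\<Union>B. R1 d B)"
    then obtain p B where "p \<in> R1 d B" "a = coeff_vec d p" by blast
    moreover have "0 < d"
      using assms by simp
    ultimately obtain k e y where "k \<in> {1..<d}" "e \<in> {1, -1}" "p = factored_poly d k e y"
      using R1_factoredE by blast
    with \<open>a = coeff_vec d p\<close> have "(k, e) \<in> {1..<d} \<times> {1, -1}" "a = F (k, e) y"
      by (auto simp: F_def)
    then show "a \<in> (\<Union>q\<in>{1..<d} \<times> {1, -1}. range (F q))"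
      by blast
  qed
qed

section \<open>Counting\<close>

lemma inj_on_monic_poly: "inj_on (monic_poly k c) (int_box (k - 1) N)"
proof
  fix y y' assume y: "y \<in> int_box (k - 1) N" "y' \<in> int_box (k - 1) N"
    and eq: "monic_poly k c y = monic_poly k c y'"
  show "y = y'"
  proof
    fix j
    show "y j = y' j"
    proof (cases "j < k - 1")
      case True
      then show ?thesis
        using arg_cong[OF eq, of "\<lambda>p. coeff p (Suc j)"] by (auto simp: coeff_monic_poly split: if_splits)
    next
      case False
      then show ?thesis
        using y by (simp add: int_box_def PiE_dflt_def)
    qed
  qed
qed

lemma P1_eq_image:
  assumes "0 < d" "1 \<le> B"
  shows "P1 d B = monic_poly d 1 ` int_box (d - 1) \<lfloor>B\<rfloor>"
proof
  show "P1 d B \<subseteq> monic_poly d 1 ` int_box (d - 1) \<lfloor>B\<rfloor>"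
  proof
    fix p assume "p \<in> P1 d B"
    then have p: "degree p = d" "lead_coeff p = 1" "coeff p 0 = 1" "\<And>i. \<bar>coeff p i\<bar> \<le> \<lfloor>B\<rfloor>"
      by (auto simp: P1_def le_floor_iff)
    have "p = monic_poly d 1 (\<lambda>j. coeff p (Suc j))"
      using monic_poly_coeffs[of p] p(1-3) assms(1) by simp
    also have "\<dots> = monic_poly d 1 (\<lambda>j. if j < d - 1 then coeff p (Suc j) else 0)"
      by (rule monic_poly_cong) simp
    finally have "p = monic_poly d 1 (\<lambda>j. if j < d - 1 then coeff p (Suc j) else 0)" .
    moreover have "(\<lambda>j. if j < d - 1 then coeff p (Suc j) else 0) \<in> int_box (d - 1) \<lfloor>B\<rfloor>"
      using p(4) by (auto simp: int_box_def PiE_dflt_def abs_le_iff minus_le_iff)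
    ultimately show "p \<in> monic_poly d 1 ` int_box (d - 1) \<lfloor>B\<rfloor>" by blast
  qed
  show "monic_poly d 1 ` int_box (d - 1) \<lfloor>B\<rfloor> \<subseteq> P1 d B"
  proof
    fix p assume "p \<in> monic_poly d 1 ` int_box (d - 1) \<lfloor>B\<rfloor>"
    then obtain y where y: "y \<in> int_box (d - 1) \<lfloor>B\<rfloor>" "p = monic_poly d 1 y" by blast
    have B: "1 \<le> \<lfloor>B\<rfloor>"
      using assms(2) by simp
    have "\<bar>y j\<bar> \<le> \<lfloor>B\<rfloor>" for j
      using y(1) B by (cases "j < d - 1") (auto simp: int_box_def PiE_dflt_def simp del: one_le_floor zero_le_floor)
    then have "\<bar>coeff p i\<bar> \<le> \<lfloor>B\<rfloor>" for i
      using B by (auto simp: y(2) coeff_monic_poly simp del: one_le_floor zero_le_floor)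
    then show "p \<in> P1 d B"
      using y(2) assms(1) by (simp add: P1_def degree_monic_poly lead_coeff_monic_poly coeff_monic_poly le_floor_iff)
  qed
qed

lemma card_P1:
  assumes "0 < d" "1 \<le> B"
  shows "card (P1 d B) = nat (2 * \<lfloor>B\<rfloor> + 1) ^ (d - 1)"
  using card_image[OF inj_on_monic_poly[of d 1]] by (simp add: P1_eq_image[OF assms] card_int_box)

lemma card_R1_le:
  assumes "0 < d"
  shows "card (R1 d B) \<le> 2 * (d - 1) * nat (2 * factor_coeff_bound d B + 1) ^ (d - 2)"
proof -
  define I where "I = {1..<d} \<times> {1::int, -1}"
  define Y where "Y = int_box (d - 2) (factor_coeff_bound d B)"
  have "R1 d B \<subseteq> (\<Union>q\<in>I. (\<lambda>y. factored_poly d (fst q) (snd q) y) ` Y)"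
  proof
    fix p assume "p \<in> R1 d B"
    then obtain k e y where "k \<in> {1..<d}" "e \<in> {1, -1}" "y \<in> Y" "p = factored_poly d k e y"
      using R1_factoredE[OF _ assms] unfolding Y_def by blast
    then show "p \<in> (\<Union>q\<in>I. (\<lambda>y. factored_poly d (fst q) (snd q) y) ` Y)"
      unfolding I_def by force
  qed
  then have "card (R1 d B) \<le> card (\<Union>q\<in>I. (\<lambda>y. factored_poly d (fst q) (snd q) y) ` Y)"
    by (intro card_mono) (auto simp: I_def Y_def finite_int_box)
  also have "\<dots> \<le> (\<Sum>q\<in>I. card ((\<lambda>y. factored_poly d (fst q) (snd q) y) ` Y))"
    by (rule card_UN_le) (simp add: I_def)
  also have "\<dots> \<le> (\<Sum>q\<in>I. card Y)"
    by (intro sum_mono card_image_le) (simp add: Y_def finite_int_box)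
  also have "\<dots> = 2 * (d - 1) * nat (2 * factor_coeff_bound d B + 1) ^ (d - 2)"
    by (simp add: I_def Y_def card_int_box card_cartesian_product)
  finally show ?thesis .
qed

lemma R1_P1_ratio_le:
  assumes "2 \<le> d" "1 \<le> B"
  defines "L \<equiv> 2 ^ (d + 1) * sqrt (real (d + 1)) + 1"
  shows "real (card (R1 d B)) / real (card (P1 d B)) \<le> 2 * (real d - 1) * L ^ (d - 2) / B"
proof -
  define c where "c = 2 ^ d * sqrt (real (d + 1))"
  define N where "N = factor_coeff_bound d B"
  have "0 \<le> N"
    using assms(2) by (simp add: N_def factor_coeff_bound_def)
  have "real_of_int N \<le> c * B"
    by (simp add: N_def factor_coeff_bound_def c_def)
  moreover have "L = 2 * c + 1"
    by (simp add: L_def c_def)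
  ultimately have "real_of_int (2 * N + 1) \<le> L * B"
    using assms(2) by (simp add: algebra_simps)
  have "real (card (R1 d B)) \<le> real (2 * (d - 1) * nat (2 * N + 1) ^ (d - 2))"
    using card_R1_le[of d B] assms(1) unfolding N_def of_nat_le_iff by simp
  also have "\<dots> = 2 * (real d - 1) * real_of_int (2 * N + 1) ^ (d - 2)"
    using \<open>0 \<le> N\<close> assms(1) by (simp add: of_nat_diff of_nat_nat)
  also have "\<dots> \<le> 2 * (real d - 1) * (L * B) ^ (d - 2)"
    using \<open>real_of_int (2 * N + 1) \<le> L * B\<close> \<open>0 \<le> N\<close> assms(1)
    by (intro mult_left_mono power_mono) auto
  finally have R1: "real (card (R1 d B)) \<le> 2 * (real d - 1) * (L * B) ^ (d - 2)" .
  have "B ^ (d - 1) \<le> real_of_int (2 * \<lfloor>B\<rfloor> + 1) ^ (d - 1)"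
    using assms(2) by (intro power_mono) linarith+
  also have "\<dots> = real (card (P1 d B))"
    using card_P1[of d B] assms(1,2) by simp
  finally have P1: "B ^ (d - 1) \<le> real (card (P1 d B))" .
  have "real (card (R1 d B)) / real (card (P1 d B)) \<le> 2 * (real d - 1) * (L * B) ^ (d - 2) / B ^ (d - 1)"
    using R1 P1 assms by (intro frac_le) auto
  also have "\<dots> = 2 * (real d - 1) * L ^ (d - 2) / B"
  proof -
    have "d - 1 = Suc (d - 2)"
      using assms(1) by simp
    then show ?thesis
      using assms(2) by (simp add: power_mult_distrib)
  qed
  finally show ?thesis .
qed

theorem theorem5p1:
  fixes d :: nat
  assumes "d \<ge> 2"
  shows "on_hypersurface (d - 1) (coeff_vec d ` (\<Union>B\<in>{B. B \<ge> 1}. R1 d B))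
         \<and> (\<lambda>B. real (card (R1 d B)) / real (card (P1 d B))) \<in> O[at_top](\<lambda>B. 1 / B)"
proof
  show "on_hypersurface (d - 1) (coeff_vec d ` (\<Union>B\<in>{B. B \<ge> 1}. R1 d B))"
    using coeff_vec_R1_on_hypersurface[OF assms] by (rule on_hypersurface_subset) blast
  define C where "C = 2 * (real d - 1) * (2 ^ (d + 1) * sqrt (real (d + 1)) + 1) ^ (d - 2)"
  have "\<forall>\<^sub>F B in at_top. norm (real (card (R1 d B)) / real (card (P1 d B))) \<le> C * norm (1 / B)"
    using eventually_ge_at_top[of "1::real"]
    by eventually_elim (use R1_P1_ratio_le[OF assms] in \<open>simp add: C_def\<close>)
  then show "(\<lambda>B. real (card (R1 d B)) / real (card (P1 d B))) \<in> O[at_top](\<lambda>B. 1 / B)"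
    by (rule bigoI)
qed

end
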